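(* Let $T>0$ and let $\alpha,\beta:\mathbb{R}\to\mathbb{R}$ be continuous $T$-periodic functions such that $\alpha=0$ on $[\tfrac T2,T]$, $\beta=0$ on $[0,\tfrac T2]$, $\alpha(t)>0$ for $t\in(0,\tfrac T2)$ and $\beta(t)>0$ for $t\in(\tfrac T2,T)$. Set $A:=\int_0^T\alpha(t)\,dt$ and $B:=\int_0^T\beta(t)\,dt$, and suppose $AB>4$. Then the system \[ u'=\alpha(t)\,u(1-v),\qquad v'=\beta(t)\,v(-1+u) \] possesses exactly two $2T$-periodic coexistence states with minimal period $2T$.
   Context: A coexistence state is a solution $(u,v)$ defined on $\mathbb{R}$ with $u(t)>0$ and $v(t)>0$ for all $t$. The constant solution $(u,v)=(1,1)$ is the unique $T$-periodic coexistence state. *)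

theory Defs
  imports "HOL-Analysis.Analysis"
begin

definition lv_solution ::
  "(real \<Rightarrow> real) \<Rightarrow> (real \<Rightarrow> real) \<Rightarrow> (real \<Rightarrow> real) \<Rightarrow> (real \<Rightarrow> real) \<Rightarrow> bool" where
  "lv_solution \<alpha> \<beta> u v \<longleftrightarrow>
     (\<forall>t. (u has_real_derivative \<alpha> t * u t * (1 - v t)) (at t) \<and>
          (v has_real_derivative \<beta> t * v t * (-1 + u t)) (at t))"

definition coexistence_state :: "(real \<Rightarrow> real) \<Rightarrow> (real \<Rightarrow> real) \<Rightarrow> bool" where
  "coexistence_state u v \<longleftrightarrow> (\<forall>t. u t > 0 \<and> v t > 0)"

definition periodic_pair :: "real \<Rightarrow> (real \<Rightarrow> real) \<Rightarrow> (real \<Rightarrow> real) \<Rightarrow> bool" where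
  "periodic_pair p u v \<longleftrightarrow> (\<forall>t. u (t + p) = u t \<and> v (t + p) = v t)"

definition minimal_period :: "real \<Rightarrow> (real \<Rightarrow> real) \<Rightarrow> (real \<Rightarrow> real) \<Rightarrow> bool" where
  "minimal_period p u v \<longleftrightarrow> p > 0 \<and> periodic_pair p u v \<and>
     (\<forall>q. 0 < q \<and> q < p \<longrightarrow> \<not> periodic_pair q u v)"

end

theory Submission
  imports Defs
begin

(* Since \<alpha> and \<beta> have disjoint supports, on each quarter period one of the two equations
   says that u or v is constant and the other one is then linear, so every solution is explicit
   in terms of antiderivatives of \<alpha> and \<beta>. For a 2T-periodic coexistence state the four
   quarter steps force u(0) + u(T) = 2 = v(0) + v(T); writing u(0) = 1 - tanh \<sigma> and
   v(0) = 1 - tanh \<rho>, the remaining conditions become 2 \<sigma> = A tanh \<rho>, 2 \<rho> = B tanh \<sigma>.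
   As tanh x / x is decreasing, for AB > 4 this system has exactly one solution with \<sigma> > 0,
   and apart from it only its negative and (0, 0). The solution (0, 0) gives the equilibrium
   (1, 1), of period T; the other two are realised by explicit solutions of minimal period 2T,
   and a periodic solution is determined by its value at 0. *)

section \<open>The tanh system\<close>

lemma sinh_gt_self:
  fixes x :: real
  assumes "x > 0"
  shows "x < sinh x"
proof -
  have "(\<lambda>z. sinh z - z) 0 < (\<lambda>z. sinh z - z) x"
  proof (rule DERIV_pos_imp_increasing_open[OF assms])
    fix z :: real
    assume "0 < z" "z < x"
    then have "cosh z > 1"
      using cosh_real_ge_1[of z] cosh_real_one_iff[of z] by linarith
    then show "\<exists>y. ((\<lambda>z. sinh z - z) has_real_derivative y) (at z) \<and> y > 0"
      by (intro exI[of _ "cosh z - 1"]) (auto intro!: derivative_eq_intros)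
  qed (intro continuous_intros)
  then show ?thesis by simp
qed

lemma tanh_div_self_strict_decreasing:
  fixes x y :: real
  assumes "0 < x" "x < y"
  shows "tanh y / y < tanh x / x"
proof (rule DERIV_neg_imp_decreasing[OF assms(2)])
  fix z :: real
  assume "x \<le> z" "z \<le> y"
  then have "z > 0" using assms by linarith
  have "1 - tanh z ^ 2 = 1 / cosh z ^ 2"
    by (simp add: tanh_def power_divide field_simps hyperbolic_pythagoras flip: cosh_square_eq)
  then have "(1 - tanh z ^ 2) * z - tanh z = z / cosh z ^ 2 - sinh z / cosh z"
    by (simp add: tanh_def)
  also have "\<dots> = (z - sinh z * cosh z) / cosh z ^ 2"
    by (simp add: field_simps power2_eq_square)
  finally have "(1 - tanh z ^ 2) * z - tanh z = (z - sinh z * cosh z) / cosh z ^ 2" .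
  moreover have "2 * z < 2 * sinh z * cosh z"
    using sinh_gt_self[of "2 * z"] \<open>z > 0\<close> by (simp add: sinh_double)
  ultimately have "(1 - tanh z ^ 2) * z - tanh z < 0"
    by (simp add: divide_neg_pos)
  then show "\<exists>d. ((\<lambda>z. tanh z / z) has_real_derivative d) (at z) \<and> d < 0"
    using \<open>z > 0\<close>
    by (intro exI[of _ "((1 - tanh z ^ 2) * z - tanh z) / z\<^sup>2"])
       (auto intro!: derivative_eq_intros divide_neg_pos simp: power2_eq_square field_simps)
qed

lemma tanh_eq_iff_exp:
  fixes y s :: real
  shows "tanh y = s \<longleftrightarrow> 1 + s = (1 - s) * exp (2 * y)"
proof -
  have pos: "exp (2 * y) + 1 > 0" by (simp add: add_pos_pos)
  have "tanh y = (exp (2 * y) - 1) / (exp (2 * y) + 1)"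
    unfolding tanh_real_altdef using pos by (simp add: exp_minus divide_simps)
  also have "\<dots> = s \<longleftrightarrow> exp (2 * y) - 1 = s * (exp (2 * y) + 1)"
    using pos by (simp add: divide_eq_eq)
  finally show ?thesis by argo
qed

definition tanh_system :: "real \<Rightarrow> real \<Rightarrow> real \<Rightarrow> real \<Rightarrow> bool" where
  "tanh_system A B \<sigma> \<rho> \<longleftrightarrow> 2 * \<sigma> = A * tanh \<rho> \<and> 2 * \<rho> = B * tanh \<sigma>"

lemma tanh_system_uminus: "tanh_system A B (-\<sigma>) (-\<rho>) \<longleftrightarrow> tanh_system A B \<sigma> \<rho>"
  by (auto simp: tanh_system_def)

lemma tanh_system_positive_solution:
  fixes A B :: real
  assumes "A > 0" "B > 0" "A * B > 4"
  obtains \<sigma> \<rho> where "\<sigma> > 0" "tanh_system A B \<sigma> \<rho>"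
proof -
  define f where "f \<sigma> = A / 2 * tanh (B / 2 * tanh \<sigma>) - \<sigma>" for \<sigma>
  have "(f has_real_derivative A / 2 * B / 2 - 1) (at 0)"
    unfolding f_def by (auto intro!: derivative_eq_intros)
  moreover have "A / 2 * B / 2 - 1 > 0" using assms(3) by simp
  ultimately obtain d where "d > 0" and f_pos: "\<And>h. 0 < h \<Longrightarrow> h < d \<Longrightarrow> f 0 < f (0 + h)"
    using DERIV_pos_inc_right by blast
  have f_bound: "f \<sigma> < A / 2 - \<sigma>" for \<sigma>
    using tanh_real_lt_1 assms(1) by (simp add: f_def)
  define h where "h = min (d / 2) (A / 2)"
  have "h > 0" "f h > 0"
    using \<open>d > 0\<close> assms(1) f_pos[of h] by (auto simp: h_def f_def)
  moreover have "f (A / 2) \<le> 0" "h \<le> A / 2"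
    using f_bound[of "A / 2"] by (auto simp: h_def)
  moreover have "continuous_on {h..A / 2} f"
    unfolding f_def by (intro continuous_intros) auto
  ultimately obtain \<sigma> where "h \<le> \<sigma>" "f \<sigma> = 0"
    using IVT2'[of f "A / 2" 0 h] by force
  then show ?thesis
    using that[of \<sigma> "B / 2 * tanh \<sigma>"] \<open>h > 0\<close> by (simp add: f_def tanh_system_def)
qed

lemma tanh_system_positive_unique:
  fixes A B :: real
  assumes "A > 0" "B > 0" "tanh_system A B \<sigma> \<rho>" "tanh_system A B \<sigma>' \<rho>'" "\<sigma> > 0" "\<sigma>' > 0"
  shows "\<sigma> = \<sigma>' \<and> \<rho> = \<rho>'"
proof -
  have False if sys: "tanh_system A B s r" "tanh_system A B s' r'" and "0 < s" "s < s'"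
    for s r s' r'
  proof -
    have "0 < B * tanh s" "B * tanh s < B * tanh s'"
      using \<open>0 < s\<close> \<open>s < s'\<close> \<open>B > 0\<close> by simp_all
    then have "0 < r" "r < r'"
      using sys by (simp_all add: tanh_system_def)
    then have "tanh r' / r' < tanh r / r" "tanh s' / s' < tanh s / s"
      using \<open>0 < s\<close> \<open>s < s'\<close> by (simp_all add: tanh_div_self_strict_decreasing)
    moreover have "tanh r = 2 * s / A" "tanh r' = 2 * s' / A" "tanh s = 2 * r / B" "tanh s' = 2 * r' / B"
      using sys \<open>A > 0\<close> \<open>B > 0\<close> by (auto simp: tanh_system_def field_simps)
    ultimately have "s' * r < s * r'" "r' * s < r * s'"
      using \<open>0 < s\<close> \<open>s < s'\<close> \<open>0 < r\<close> \<open>r < r'\<close> \<open>A > 0\<close> \<open>B > 0\<close>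
      by (simp_all add: divide_simps)
    then show False by (simp add: mult.commute)
  qed
  then have "\<sigma> = \<sigma>'"
    using assms by (metis linorder_neqE_linordered_idom)
  then show ?thesis
    using assms(3,4) \<open>B > 0\<close> by (simp add: tanh_system_def)
qed

lemma tanh_system_nonzero_solutions:
  fixes A B :: real
  assumes "A > 0" "B > 0" "A * B > 4"
  obtains \<sigma>\<^sub>0 \<rho>\<^sub>0 where "\<sigma>\<^sub>0 > 0"
    "{(\<sigma>, \<rho>). tanh_system A B \<sigma> \<rho> \<and> \<sigma> \<noteq> 0} = {(\<sigma>\<^sub>0, \<rho>\<^sub>0), (-\<sigma>\<^sub>0, -\<rho>\<^sub>0)}"
proof -
  obtain \<sigma>\<^sub>0 \<rho>\<^sub>0 where pos: "\<sigma>\<^sub>0 > 0" and sys: "tanh_system A B \<sigma>\<^sub>0 \<rho>\<^sub>0"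
    using tanh_system_positive_solution[OF assms] .
  have "(\<sigma>, \<rho>) = (\<sigma>\<^sub>0, \<rho>\<^sub>0) \<or> (\<sigma>, \<rho>) = (-\<sigma>\<^sub>0, -\<rho>\<^sub>0)"
    if "tanh_system A B \<sigma> \<rho>" "\<sigma> \<noteq> 0" for \<sigma> \<rho>
  proof (cases "\<sigma> > 0")
    case True
    then show ?thesis
      using tanh_system_positive_unique[OF assms(1,2) that(1) sys] pos by simp
  next
    case False
    then have "tanh_system A B (-\<sigma>) (-\<rho>)" "-\<sigma> > 0"
      using that by (simp_all add: tanh_system_uminus)
    then show ?thesis
      using tanh_system_positive_unique[OF assms(1,2) _ sys] pos by force
  qed
  moreover have "tanh_system A B (-\<sigma>\<^sub>0) (-\<rho>\<^sub>0)"
    using sys by (simp add: tanh_system_uminus)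
  ultimately have "{(\<sigma>, \<rho>). tanh_system A B \<sigma> \<rho> \<and> \<sigma> \<noteq> 0} = {(\<sigma>\<^sub>0, \<rho>\<^sub>0), (-\<sigma>\<^sub>0, -\<rho>\<^sub>0)}"
    using sys pos by auto
  then show ?thesis
    using that pos by blast
qed

section \<open>Periodic functions, antiderivatives and linear equations\<close>

lemma periodic_induct:
  fixes P :: "real \<Rightarrow> bool"
  assumes "p > 0"
    and periodic: "\<And>t. P (t + p) \<longleftrightarrow> P t"
    and base: "\<And>t. 0 \<le> t \<Longrightarrow> t < p \<Longrightarrow> P t"
  shows "P t"
proof -
  have shift: "P (s + real_of_int n * p) \<longleftrightarrow> P s" for n s
  proof (induction n arbitrary: s rule: int_induct[where k = 0])
    case (step1 i)
    then show ?case
      using periodic[of "s + real_of_int i * p"] by (simp add: algebra_simps)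
  next
    case (step2 i)
    then show ?case
      using periodic[of "s + real_of_int (i - 1) * p"] by (simp add: algebra_simps)
  qed simp
  define n where "n = \<lfloor>t / p\<rfloor>"
  have "real_of_int n * p \<le> t" "t < real_of_int n * p + p"
    using floor_divide_lower[OF \<open>p > 0\<close>, of t] floor_divide_upper[OF \<open>p > 0\<close>, of t]
    by (simp_all add: n_def algebra_simps)
  then have "P (t - real_of_int n * p)"
    by (intro base) simp_all
  then show ?thesis
    using shift[of "t - real_of_int n * p" n] by simp
qed

lemma DERIV_periodic:
  assumes "\<And>t. f (t + p) = f t" and "\<And>t. (f has_real_derivative f' t) (at t)"
  shows "f' (t + p) = f' t"
proof -
  have "((\<lambda>x. f (x + p)) has_real_derivative f' (t + p)) (at t)"
    using assms(2)[of "t + p"] by (simp add: DERIV_shift)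
  then have "(f has_real_derivative f' (t + p)) (at t)"
    using assms(1) by simp
  then show ?thesis
    using assms(2) DERIV_unique by blast
qed

definition antideriv :: "(real \<Rightarrow> real) \<Rightarrow> real \<Rightarrow> real" where
  "antideriv f = (SOME F. F 0 = 0 \<and> (\<forall>x. (F has_real_derivative f x) (at x)))"

lemma antideriv_spec:
  assumes "continuous_on UNIV f"
  shows "antideriv f 0 = 0 \<and> (\<forall>x. (antideriv f has_real_derivative f x) (at x))"
proof -
  obtain F where "\<And>x. (F has_vector_derivative f x) (at x)"
    using einterval_antiderivative[of "-\<infinity>" "\<infinity>" f] assms
    by (auto simp: continuous_on_eq_continuous_at)
  then have "\<exists>F. F 0 = 0 \<and> (\<forall>x. (F has_real_derivative f x) (at x))"
    by (intro exI[of _ "\<lambda>x. F x - F 0"])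
       (auto intro!: derivative_eq_intros simp: has_real_derivative_iff_has_vector_derivative)
  then show ?thesis
    unfolding antideriv_def by (rule someI_ex)
qed

lemma antideriv_0 [simp]: "continuous_on UNIV f \<Longrightarrow> antideriv f 0 = 0"
  using antideriv_spec by blast

lemma has_real_derivative_antideriv:
  "continuous_on UNIV f \<Longrightarrow> (antideriv f has_real_derivative f x) (at x)"
  using antideriv_spec by blast

lemma continuous_on_antideriv: "continuous_on UNIV f \<Longrightarrow> continuous_on UNIV (antideriv f)"
  by (meson DERIV_isCont continuous_at_imp_continuous_on has_real_derivative_antideriv)

lemma integral_antideriv:
  assumes "continuous_on UNIV f" "0 \<le> b"
  shows "integral {0..b} f = antideriv f b"
proof -
  have "(f has_integral (antideriv f b - antideriv f 0)) {0..b}"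
    using assms has_real_derivative_antideriv
    by (intro fundamental_theorem_of_calculus)
       (auto simp flip: has_real_derivative_iff_has_vector_derivative intro: has_field_derivative_at_within)
  then show ?thesis
    using assms(1) by (simp add: integral_unique)
qed

lemma antideriv_add_period:
  assumes "continuous_on UNIV f" "\<And>t. f (t + p) = f t"
  shows "antideriv f (t + p) = antideriv f t + antideriv f p"
proof -
  have "((\<lambda>t. antideriv f (t + p) - antideriv f t) has_real_derivative 0) (at x)" for x
    using DERIV_diff[OF has_real_derivative_antideriv[OF assms(1), of "x + p", unfolded DERIV_shift]
        has_real_derivative_antideriv[OF assms(1)]] assms(2) by simp
  then have "antideriv f (t + p) - antideriv f t = antideriv f (0 + p) - antideriv f 0"
    by (rule DERIV_isconst_all[rule_format])
  then show ?thesis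
    using assms(1) by simp
qed

lemma DERIV_zero_imp_constant_on_interval:
  fixes h :: "real \<Rightarrow> real"
  assumes "\<And>x. x \<in> {p..q} \<Longrightarrow> (h has_real_derivative 0) (at x)" "t \<in> {p..q}"
  shows "h t = h p"
proof -
  obtain c where "\<forall>x\<in>{p..q}. h x = c"
    using has_field_derivative_zero_constant[of "{p..q}" h] assms(1)
    by (auto intro: has_field_derivative_at_within)
  then show ?thesis
    using assms(2) by auto
qed

lemma increment_proportional:
  assumes "\<And>x. x \<in> {p..q} \<Longrightarrow> (G has_real_derivative g x) (at x)"
    and "\<And>x. x \<in> {p..q} \<Longrightarrow> (F has_real_derivative f x) (at x)"
    and "\<And>x. x \<in> {p..q} \<Longrightarrow> g x = c * f x"
    and "t \<in> {p..q}"
  shows "G t - G p = c * (F t - F p)"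
proof -
  have "(\<lambda>x. G x - c * F x) t = (\<lambda>x. G x - c * F x) p"
    using assms by (intro DERIV_zero_imp_constant_on_interval[of p q]) (auto intro!: derivative_eq_intros)
  then show ?thesis
    by (simp add: algebra_simps)
qed

lemma linear_ode_explicit_solution:
  assumes "\<And>x. x \<in> {p..q} \<Longrightarrow> (y has_real_derivative g x) (at x)"
    and "\<And>x. x \<in> {p..q} \<Longrightarrow> (F has_real_derivative f x) (at x)"
    and "\<And>x. x \<in> {p..q} \<Longrightarrow> g x = c * f x * y x"
    and "t \<in> {p..q}"
  shows "y t = y p * exp (c * (F t - F p))"
proof -
  have "(\<lambda>x. y x * exp (- c * F x)) t = (\<lambda>x. y x * exp (- c * F x)) p"
    using assms by (intro DERIV_zero_imp_constant_on_interval[of p q]) (auto intro!: derivative_eq_intros)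
  then show ?thesis
    by (simp add: exp_diff exp_minus field_simps)
qed

lemma lv_solution_shift:
  assumes "lv_solution \<alpha> \<beta> u v" "\<And>t. \<alpha> (t + p) = \<alpha> t" "\<And>t. \<beta> (t + p) = \<beta> t"
  shows "lv_solution \<alpha> \<beta> (\<lambda>t. u (t + p)) (\<lambda>t. v (t + p))"
  using assms unfolding lv_solution_def by (metis DERIV_shift)

lemma lv_solution_const: "lv_solution \<alpha> \<beta> (\<lambda>_. 1) (\<lambda>_. 1)"
  by (simp add: lv_solution_def)

lemma lv_solution_on_beta_zero_interval:
  assumes sol: "lv_solution \<alpha> \<beta> u v" and \<beta>_zero: "\<And>x. x \<in> {p..q} \<Longrightarrow> \<beta> x = 0"
    and F: "\<And>x. x \<in> {p..q} \<Longrightarrow> (F has_real_derivative \<alpha> x) (at x)" and t: "t \<in> {p..q}"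
  shows "v t = v p \<and> u t = u p * exp ((1 - v p) * (F t - F p))"
proof -
  have v_const: "v x = v p" if "x \<in> {p..q}" for x
  proof (rule DERIV_zero_imp_constant_on_interval[OF _ that])
    fix y
    assume "y \<in> {p..q}"
    moreover have "(v has_real_derivative \<beta> y * v y * (-1 + u y)) (at y)"
      using sol unfolding lv_solution_def by blast
    ultimately show "(v has_real_derivative 0) (at y)"
      using \<beta>_zero by simp
  qed
  have "u t = u p * exp ((1 - v p) * (F t - F p))"
  proof (rule linear_ode_explicit_solution[where g = "\<lambda>x. \<alpha> x * u x * (1 - v x)", OF _ F _ t])
    fix x
    assume "x \<in> {p..q}"
    show "(u has_real_derivative \<alpha> x * u x * (1 - v x)) (at x)"
      using sol unfolding lv_solution_def by blast
    show "\<alpha> x * u x * (1 - v x) = (1 - v p) * \<alpha> x * u x"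
      using v_const[OF \<open>x \<in> {p..q}\<close>] by simp
  qed
  with v_const[OF t] show ?thesis ..
qed

lemma lv_solution_on_alpha_zero_interval:
  assumes sol: "lv_solution \<alpha> \<beta> u v" and \<alpha>_zero: "\<And>x. x \<in> {p..q} \<Longrightarrow> \<alpha> x = 0"
    and F: "\<And>x. x \<in> {p..q} \<Longrightarrow> (F has_real_derivative \<beta> x) (at x)" and t: "t \<in> {p..q}"
  shows "u t = u p \<and> v t = v p * exp ((u p - 1) * (F t - F p))"
proof -
  have u_const: "u x = u p" if "x \<in> {p..q}" for x
  proof (rule DERIV_zero_imp_constant_on_interval[OF _ that])
    fix y
    assume "y \<in> {p..q}"
    moreover have "(u has_real_derivative \<alpha> y * u y * (1 - v y)) (at y)"
      using sol unfolding lv_solution_def by blast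
    ultimately show "(u has_real_derivative 0) (at y)"
      using \<alpha>_zero by simp
  qed
  have "v t = v p * exp ((u p - 1) * (F t - F p))"
  proof (rule linear_ode_explicit_solution[where g = "\<lambda>x. \<beta> x * v x * (-1 + u x)", OF _ F _ t])
    fix x
    assume "x \<in> {p..q}"
    show "(v has_real_derivative \<beta> x * v x * (-1 + u x)) (at x)"
      using sol unfolding lv_solution_def by blast
    show "\<beta> x * v x * (-1 + u x) = (u p - 1) * \<beta> x * v x"
      using u_const[OF \<open>x \<in> {p..q}\<close>] by simp
  qed
  with u_const[OF t] show ?thesis ..
qed

section \<open>Solutions over one period\<close>

locale lv_setting =
  fixes T :: real and \<alpha> \<beta> :: "real \<Rightarrow> real"
  assumes T_pos: "T > 0"
    and cont_\<alpha>: "continuous_on UNIV \<alpha>" and cont_\<beta>: "continuous_on UNIV \<beta>"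
    and \<alpha>_periodic: "\<forall>t. \<alpha> (t + T) = \<alpha> t" and \<beta>_periodic: "\<forall>t. \<beta> (t + T) = \<beta> t"
    and \<alpha>_zero: "\<forall>t\<in>{T/2..T}. \<alpha> t = 0" and \<beta>_zero: "\<forall>t\<in>{0..T/2}. \<beta> t = 0"
    and \<alpha>_pos: "\<forall>t\<in>{0<..<T/2}. \<alpha> t > 0" and \<beta>_pos: "\<forall>t\<in>{T/2<..<T}. \<beta> t > 0"
    and AB_gt_4: "integral {0..T} \<alpha> * integral {0..T} \<beta> > 4"
begin

abbreviation "A \<equiv> integral {0..T} \<alpha>"
abbreviation "B \<equiv> integral {0..T} \<beta>"
abbreviation "F\<^sub>\<alpha> \<equiv> antideriv \<alpha>"
abbreviation "F\<^sub>\<beta> \<equiv> antideriv \<beta>"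

lemma \<alpha>_2T_periodic: "\<alpha> (t + 2 * T) = \<alpha> t"
  using \<alpha>_periodic by (metis add.assoc mult_2)

lemma \<beta>_2T_periodic: "\<beta> (t + 2 * T) = \<beta> t"
  using \<beta>_periodic by (metis add.assoc mult_2)

lemma \<alpha>_zero': "t \<in> {3 * T / 2..2 * T} \<Longrightarrow> \<alpha> t = 0"
  using \<alpha>_zero \<alpha>_periodic[rule_format, of "t - T"] by simp

lemma \<beta>_zero': "t \<in> {T..3 * T / 2} \<Longrightarrow> \<beta> t = 0"
  using \<beta>_zero \<beta>_periodic[rule_format, of "t - T"] by simp

lemma \<alpha>_pos': "t \<in> {T<..<3 * T / 2} \<Longrightarrow> \<alpha> t > 0"
  using \<alpha>_pos \<alpha>_periodic[rule_format, of "t - T"] by simp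

lemma A_pos: "A > 0" and B_pos: "B > 0"
proof -
  have "\<alpha> t \<ge> 0" if "t \<in> {0..T}" for t
    using that T_pos \<alpha>_pos \<alpha>_zero \<alpha>_periodic[rule_format, of 0]
    by (cases "t = 0 \<or> t \<ge> T / 2") (auto simp: less_eq_real_def)
  then have "A \<ge> 0"
    by (intro integral_nonneg integrable_continuous_interval continuous_on_subset[OF cont_\<alpha>]) auto
  have "\<beta> t \<ge> 0" if "t \<in> {0..T}" for t
    using that T_pos \<beta>_pos \<beta>_zero \<beta>_periodic[rule_format, of 0]
    by (cases "t = T \<or> t \<le> T / 2") (auto simp: less_eq_real_def)
  then have "B \<ge> 0"
    by (intro integral_nonneg integrable_continuous_interval continuous_on_subset[OF cont_\<beta>]) auto
  show "A > 0" "B > 0"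
    using \<open>A \<ge> 0\<close> \<open>B \<ge> 0\<close> AB_gt_4 by (auto simp: less_eq_real_def)
qed

lemma F\<^sub>\<alpha>_deriv: "(F\<^sub>\<alpha> has_real_derivative \<alpha> x) (at x)"
  using cont_\<alpha> by (rule has_real_derivative_antideriv)

lemma F\<^sub>\<beta>_deriv: "(F\<^sub>\<beta> has_real_derivative \<beta> x) (at x)"
  using cont_\<beta> by (rule has_real_derivative_antideriv)

lemma F\<^sub>\<alpha>_0 [simp]: "F\<^sub>\<alpha> 0 = 0" and F\<^sub>\<beta>_0 [simp]: "F\<^sub>\<beta> 0 = 0"
  using cont_\<alpha> cont_\<beta> by simp_all

lemma F\<^sub>\<alpha>_T [simp]: "F\<^sub>\<alpha> T = A" and F\<^sub>\<beta>_T [simp]: "F\<^sub>\<beta> T = B"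
  using cont_\<alpha> cont_\<beta> T_pos by (simp_all add: integral_antideriv)

lemma F\<^sub>\<alpha>_add_T: "F\<^sub>\<alpha> (t + T) = F\<^sub>\<alpha> t + A"
  using antideriv_add_period[OF cont_\<alpha>] \<alpha>_periodic by simp

lemma F\<^sub>\<beta>_add_T: "F\<^sub>\<beta> (t + T) = F\<^sub>\<beta> t + B"
  using antideriv_add_period[OF cont_\<beta>] \<beta>_periodic by simp

lemma F\<^sub>\<alpha>_second_quarter: "t \<in> {T/2..T} \<Longrightarrow> F\<^sub>\<alpha> t = A"
  using increment_proportional[OF F\<^sub>\<alpha>_deriv F\<^sub>\<alpha>_deriv, of t T 0 T] \<alpha>_zero by simp

lemma F\<^sub>\<alpha>_fourth_quarter: "t \<in> {3*T/2..2*T} \<Longrightarrow> F\<^sub>\<alpha> t = 2 * A"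
  using F\<^sub>\<alpha>_second_quarter[of "t - T"] F\<^sub>\<alpha>_add_T[of "t - T"] by simp

lemma F\<^sub>\<beta>_first_quarter: "t \<in> {0..T/2} \<Longrightarrow> F\<^sub>\<beta> t = 0"
  using increment_proportional[OF F\<^sub>\<beta>_deriv F\<^sub>\<beta>_deriv, of 0 "T/2" 0 t] \<beta>_zero by simp

lemma F\<^sub>\<beta>_third_quarter: "t \<in> {T..3*T/2} \<Longrightarrow> F\<^sub>\<beta> t = B"
  using F\<^sub>\<beta>_first_quarter[of "t - T"] F\<^sub>\<beta>_add_T[of "t - T"] by simp

lemma solution_on_half_period:
  assumes sol: "lv_solution \<alpha> \<beta> u v" and t: "t \<in> {0..T}"
  shows "u t = u 0 * exp ((1 - v 0) * F\<^sub>\<alpha> t) \<and> v t = v 0 * exp ((u t - 1) * F\<^sub>\<beta> t)"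
proof (cases "t \<le> T/2")
  case True
  then show ?thesis
    using lv_solution_on_beta_zero_interval[OF sol _ F\<^sub>\<alpha>_deriv, of 0 "T/2" t] \<beta>_zero t
      F\<^sub>\<beta>_first_quarter[of t] by simp
next
  case False
  have first_quarter: "v (T/2) = v 0 \<and> u (T/2) = u 0 * exp ((1 - v 0) * A)"
    using lv_solution_on_beta_zero_interval[OF sol _ F\<^sub>\<alpha>_deriv, of 0 "T/2" "T/2"] \<beta>_zero T_pos
      F\<^sub>\<alpha>_second_quarter[of "T/2"] by simp
  have "u t = u (T/2) \<and> v t = v (T/2) * exp ((u (T/2) - 1) * F\<^sub>\<beta> t)"
    using lv_solution_on_alpha_zero_interval[OF sol _ F\<^sub>\<beta>_deriv, of "T/2" T t] \<alpha>_zero t False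
      F\<^sub>\<beta>_first_quarter[of "T/2"] T_pos by simp
  then show ?thesis
    using first_quarter F\<^sub>\<alpha>_second_quarter[of t] t False by simp
qed

lemma half_period_map:
  assumes "lv_solution \<alpha> \<beta> u v"
  shows "u T = u 0 * exp ((1 - v 0) * A)" "v T = v 0 * exp ((u T - 1) * B)"
  using solution_on_half_period[OF assms, of T] T_pos by simp_all

lemma solution_shift_T: "lv_solution \<alpha> \<beta> u v \<Longrightarrow> lv_solution \<alpha> \<beta> (\<lambda>t. u (t + T)) (\<lambda>t. v (t + T))"
  using lv_solution_shift \<alpha>_periodic \<beta>_periodic by blast

lemma periodic_solutions_unique:
  assumes sol: "lv_solution \<alpha> \<beta> u v" "lv_solution \<alpha> \<beta> u' v'"
    and per: "periodic_pair (2 * T) u v" "periodic_pair (2 * T) u' v'"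
    and init: "u 0 = u' 0" "v 0 = v' 0"
  shows "u = u' \<and> v = v'"
proof -
  have agree: "u\<^sub>1 t = u\<^sub>2 t \<and> v\<^sub>1 t = v\<^sub>2 t"
    if "lv_solution \<alpha> \<beta> u\<^sub>1 v\<^sub>1" "lv_solution \<alpha> \<beta> u\<^sub>2 v\<^sub>2" "u\<^sub>1 0 = u\<^sub>2 0" "v\<^sub>1 0 = v\<^sub>2 0" "t \<in> {0..T}"
    for u\<^sub>1 v\<^sub>1 u\<^sub>2 v\<^sub>2 t
    using solution_on_half_period[OF that(1,5)] solution_on_half_period[OF that(2,5)] that(3,4)
    by simp
  have "u T = u' T" "v T = v' T"
    using agree[OF sol init, of T] T_pos by auto
  then have second_half: "u (t + T) = u' (t + T) \<and> v (t + T) = v' (t + T)" if "t \<in> {0..T}" for t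
    using agree[OF solution_shift_T[OF sol(1)] solution_shift_T[OF sol(2)] _ _ that] by simp
  have "u t = u' t \<and> v t = v' t" (is "?P t") for t
  proof (rule periodic_induct[where P = ?P and p = "2 * T"])
    show "?P (t + 2 * T) \<longleftrightarrow> ?P t" for t
      using per by (simp add: periodic_pair_def)
    show "?P t" if "0 \<le> t" "t < 2 * T" for t
      using agree[OF sol init, of t] second_half[of "t - T"] that by (cases "t \<le> T") auto
  qed (use T_pos in simp)
  then show ?thesis
    by auto
qed

lemma periodic_state_tanh_system:
  assumes sol: "lv_solution \<alpha> \<beta> u v" and pos: "coexistence_state u v"
    and per: "periodic_pair (2 * T) u v"
  obtains \<sigma> \<rho> where "tanh_system A B \<sigma> \<rho>" "u 0 = 1 - tanh \<sigma>" "v 0 = 1 - tanh \<rho>"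
proof -
  have "u (T + T) = u 0" "v (T + T) = v 0"
    using per unfolding periodic_pair_def by (metis add_0 mult_2)+
  then have second_half: "u 0 = u T * exp ((1 - v T) * A)" "v 0 = v T * exp ((u 0 - 1) * B)"
    using half_period_map[OF solution_shift_T[OF sol]] by simp_all
  have pos_0: "u 0 > 0" "v 0 > 0"
    using pos by (simp_all add: coexistence_state_def)
  have "u 0 * 1 = u 0 * exp ((1 - v 0) * A + (1 - v T) * A)"
    using second_half(1)[unfolded half_period_map(1)[OF sol]] by (simp add: exp_add mult.assoc)
  then have "(2 - v 0 - v T) * A = 0"
    using pos_0 by (simp add: algebra_simps)
  then have v_sum: "v 0 + v T = 2"
    using A_pos by simp
  have "v 0 * 1 = v 0 * exp ((u T - 1) * B + (u 0 - 1) * B)"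
    using second_half(2)[unfolded half_period_map(2)[OF sol]] by (simp add: exp_add mult.assoc)
  then have "(u 0 + u T - 2) * B = 0"
    using pos_0 by (simp add: algebra_simps)
  then have u_sum: "u 0 + u T = 2"
    using B_pos by simp
  have u_T: "u T = 2 - u 0" and u_T': "u T - 1 = 1 - u 0" and v_T: "v T = 2 - v 0"
    using u_sum v_sum by simp_all
  define \<sigma> \<rho> where "\<sigma> = A * (1 - v 0) / 2" and "\<rho> = B * (1 - u 0) / 2"
  have tanh_\<sigma>: "tanh \<sigma> = 1 - u 0"
    unfolding tanh_eq_iff_exp using half_period_map(1)[OF sol, unfolded u_T]
    by (simp add: \<sigma>_def mult.commute)
  have tanh_\<rho>: "tanh \<rho> = 1 - v 0"
    unfolding tanh_eq_iff_exp using half_period_map(2)[OF sol, unfolded u_T' v_T]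
    by (simp add: \<rho>_def mult.commute)
  have "tanh_system A B \<sigma> \<rho>"
    unfolding tanh_system_def tanh_\<sigma> tanh_\<rho> by (simp add: \<sigma>_def \<rho>_def)
  then show ?thesis
    by (rule that) (simp_all add: tanh_\<sigma> tanh_\<rho>)
qed

section \<open>Explicit periodic solutions\<close>

(* phi and psi are continuous 2T-periodic switches: phi = 1 on [0, T/2] and -1 on [T, 3T/2],
   psi = 1 on [T/2, T] and -1 on [3T/2, 2T]. On the supports of \<alpha> and \<beta> they are the signs
   of 1 - v and u - 1 along u_sol and v_sol below, which is what makes these explicit
   exponentials solve the system. *)
definition phi :: "real \<Rightarrow> real" where
  "phi t = cos (pi * F\<^sub>\<beta> t / B)"

definition psi :: "real \<Rightarrow> real" where
  "psi t = - cos (pi * F\<^sub>\<alpha> t / A)"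

lemma F\<^sub>\<alpha>_add_2T: "F\<^sub>\<alpha> (t + 2 * T) = F\<^sub>\<alpha> t + 2 * A"
proof -
  have "t + 2 * T = (t + T) + T"
    by simp
  then show ?thesis
    by (simp only: F\<^sub>\<alpha>_add_T)
qed

lemma F\<^sub>\<beta>_add_2T: "F\<^sub>\<beta> (t + 2 * T) = F\<^sub>\<beta> t + 2 * B"
proof -
  have "t + 2 * T = (t + T) + T"
    by simp
  then show ?thesis
    by (simp only: F\<^sub>\<beta>_add_T)
qed

lemma phi_2T_periodic: "phi (t + 2 * T) = phi t"
proof -
  have "pi * (F\<^sub>\<beta> t + 2 * B) / B = pi * F\<^sub>\<beta> t / B + 2 * pi"
    using B_pos by (simp add: field_simps)
  then show ?thesis
    by (simp add: phi_def F\<^sub>\<beta>_add_2T)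
qed

lemma psi_2T_periodic: "psi (t + 2 * T) = psi t"
proof -
  have "pi * (F\<^sub>\<alpha> t + 2 * A) / A = pi * F\<^sub>\<alpha> t / A + 2 * pi"
    using A_pos by (simp add: field_simps)
  then show ?thesis
    by (simp add: psi_def F\<^sub>\<alpha>_add_2T)
qed

lemma phi_first_quarter: "t \<in> {0..T/2} \<Longrightarrow> phi t = 1"
  by (simp add: phi_def F\<^sub>\<beta>_first_quarter)

lemma phi_third_quarter: "t \<in> {T..3*T/2} \<Longrightarrow> phi t = -1"
  using B_pos by (simp add: phi_def F\<^sub>\<beta>_third_quarter)

lemma psi_second_quarter: "t \<in> {T/2..T} \<Longrightarrow> psi t = 1"
  using A_pos by (simp add: psi_def F\<^sub>\<alpha>_second_quarter)

lemma psi_fourth_quarter: "t \<in> {3*T/2..2*T} \<Longrightarrow> psi t = -1"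
  using A_pos by (simp add: psi_def F\<^sub>\<alpha>_fourth_quarter)

lemma continuous_on_\<alpha>_phi: "continuous_on UNIV (\<lambda>t. \<alpha> t * phi t)"
  unfolding phi_def using B_pos
  by (intro continuous_intros cont_\<alpha> continuous_on_antideriv cont_\<beta>) auto

lemma continuous_on_\<beta>_psi: "continuous_on UNIV (\<lambda>t. \<beta> t * psi t)"
  unfolding psi_def using A_pos
  by (intro continuous_intros cont_\<beta> continuous_on_antideriv cont_\<alpha>) auto

abbreviation "G \<equiv> antideriv (\<lambda>t. \<alpha> t * phi t)"
abbreviation "H \<equiv> antideriv (\<lambda>t. \<beta> t * psi t)"

lemma G_deriv: "(G has_real_derivative \<alpha> x * phi x) (at x)"
  using continuous_on_\<alpha>_phi by (rule has_real_derivative_antideriv)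

lemma H_deriv: "(H has_real_derivative \<beta> x * psi x) (at x)"
  using continuous_on_\<beta>_psi by (rule has_real_derivative_antideriv)

lemma G_second_quarter:
  assumes "t \<in> {T/2..T}"
  shows "G t = A"
proof -
  have "G (T/2) - G 0 = 1 * (F\<^sub>\<alpha> (T/2) - F\<^sub>\<alpha> 0)"
    by (rule increment_proportional[OF G_deriv F\<^sub>\<alpha>_deriv, of 0 "T/2"])
       (use T_pos in \<open>auto simp: phi_first_quarter\<close>)
  moreover have "G t - G (T/2) = 0 * (F\<^sub>\<alpha> t - F\<^sub>\<alpha> (T/2))"
    by (rule increment_proportional[OF G_deriv F\<^sub>\<alpha>_deriv, of "T/2" T])
       (use assms \<alpha>_zero in auto)
  ultimately show ?thesis
    using continuous_on_\<alpha>_phi F\<^sub>\<alpha>_second_quarter[of "T/2"] T_pos by simp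
qed

lemma G_fourth_quarter:
  assumes "t \<in> {3*T/2..2*T}"
  shows "G t = 0"
proof -
  have "G (3*T/2) - G T = (-1) * (F\<^sub>\<alpha> (3*T/2) - F\<^sub>\<alpha> T)"
    by (rule increment_proportional[OF G_deriv F\<^sub>\<alpha>_deriv, of T "3*T/2"])
       (use T_pos in \<open>auto simp: phi_third_quarter\<close>)
  moreover have "G t - G (3*T/2) = 0 * (F\<^sub>\<alpha> t - F\<^sub>\<alpha> (3*T/2))"
    by (rule increment_proportional[OF G_deriv F\<^sub>\<alpha>_deriv, of "3*T/2" "2*T"])
       (use assms \<alpha>_zero' in auto)
  ultimately show ?thesis
    using G_second_quarter[of T] F\<^sub>\<alpha>_fourth_quarter[of "3*T/2"] T_pos by simp
qed

lemma G_2T_periodic: "G (t + 2 * T) = G t"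
  using antideriv_add_period[OF continuous_on_\<alpha>_phi, of "2 * T" t] \<alpha>_2T_periodic phi_2T_periodic
    G_fourth_quarter[of "2 * T"] T_pos by simp

lemma H_first_quarter:
  assumes "t \<in> {0..T/2}"
  shows "H t = 0"
  using increment_proportional[OF H_deriv F\<^sub>\<beta>_deriv, of 0 "T/2" 0 t] assms \<beta>_zero
    continuous_on_\<beta>_psi by simp

lemma H_third_quarter:
  assumes "t \<in> {T..3*T/2}"
  shows "H t = B"
proof -
  have "H T - H (T/2) = 1 * (F\<^sub>\<beta> T - F\<^sub>\<beta> (T/2))"
    by (rule increment_proportional[OF H_deriv F\<^sub>\<beta>_deriv, of "T/2" T])
       (use T_pos in \<open>auto simp: psi_second_quarter\<close>)
  moreover have "H t - H T = 0 * (F\<^sub>\<beta> t - F\<^sub>\<beta> T)"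
    by (rule increment_proportional[OF H_deriv F\<^sub>\<beta>_deriv, of T "3*T/2"])
       (use assms \<beta>_zero' in auto)
  ultimately show ?thesis
    using H_first_quarter[of "T/2"] F\<^sub>\<beta>_first_quarter[of "T/2"] T_pos by simp
qed

lemma H_2T_periodic: "H (t + 2 * T) = H t"
proof -
  have "H (2*T) - H (3*T/2) = (-1) * (F\<^sub>\<beta> (2*T) - F\<^sub>\<beta> (3*T/2))"
    by (rule increment_proportional[OF H_deriv F\<^sub>\<beta>_deriv, of "3*T/2" "2*T"])
       (use T_pos in \<open>auto simp: psi_fourth_quarter\<close>)
  moreover have "F\<^sub>\<beta> (2*T) = 2 * B"
    using F\<^sub>\<beta>_add_2T[of 0] by simp
  ultimately have "H (2 * T) = 0"
    using H_third_quarter[of "3*T/2"] F\<^sub>\<beta>_third_quarter[of "3*T/2"] T_pos by simp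
  then show ?thesis
    using antideriv_add_period[OF continuous_on_\<beta>_psi, of "2 * T" t] \<beta>_2T_periodic psi_2T_periodic
    by simp
qed

definition u_sol :: "real \<Rightarrow> real \<Rightarrow> real \<Rightarrow> real" where
  "u_sol \<sigma> \<rho> t = (1 - tanh \<sigma>) * exp (tanh \<rho> * G t)"

definition v_sol :: "real \<Rightarrow> real \<Rightarrow> real \<Rightarrow> real" where
  "v_sol \<sigma> \<rho> t = (1 - tanh \<rho>) * exp (tanh \<sigma> * H t)"

lemma u_sol_0 [simp]: "u_sol \<sigma> \<rho> 0 = 1 - tanh \<sigma>"
  using continuous_on_\<alpha>_phi by (simp add: u_sol_def)

lemma u_sol_second_quarter:
  assumes "tanh_system A B \<sigma> \<rho>" "t \<in> {T/2..T}"
  shows "u_sol \<sigma> \<rho> t = 1 + tanh \<sigma>"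
  using assms tanh_eq_iff_exp[of \<sigma> "tanh \<sigma>"]
  by (simp add: u_sol_def G_second_quarter tanh_system_def mult.commute)

lemma u_sol_fourth_quarter: "t \<in> {3*T/2..2*T} \<Longrightarrow> u_sol \<sigma> \<rho> t = 1 - tanh \<sigma>"
  by (simp add: u_sol_def G_fourth_quarter)

lemma v_sol_first_quarter: "t \<in> {0..T/2} \<Longrightarrow> v_sol \<sigma> \<rho> t = 1 - tanh \<rho>"
  by (simp add: v_sol_def H_first_quarter)

lemma v_sol_third_quarter:
  assumes "tanh_system A B \<sigma> \<rho>" "t \<in> {T..3*T/2}"
  shows "v_sol \<sigma> \<rho> t = 1 + tanh \<rho>"
  using assms tanh_eq_iff_exp[of \<rho> "tanh \<rho>"]
  by (simp add: v_sol_def H_third_quarter tanh_system_def mult.commute)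

lemma periodic_pair_sol: "periodic_pair (2 * T) (u_sol \<sigma> \<rho>) (v_sol \<sigma> \<rho>)"
  by (simp add: periodic_pair_def u_sol_def v_sol_def G_2T_periodic H_2T_periodic)

lemma coexistence_state_sol: "coexistence_state (u_sol \<sigma> \<rho>) (v_sol \<sigma> \<rho>)"
  using tanh_real_lt_1 by (simp add: coexistence_state_def u_sol_def v_sol_def)

lemma period_quarters:
  assumes "0 \<le> t" "t < 2 * T"
  obtains "t \<in> {0..T/2}" | "t \<in> {T/2..T}" | "t \<in> {T..3*T/2}" | "t \<in> {3*T/2..2*T}"
  using assms by (meson atLeastAtMost_iff linorder_le_cases less_imp_le)

lemma \<alpha>_one_minus_v_sol:
  assumes sys: "tanh_system A B \<sigma> \<rho>"
  shows "\<alpha> t * (1 - v_sol \<sigma> \<rho> t) = tanh \<rho> * (\<alpha> t * phi t)" (is "?P t")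
proof (rule periodic_induct[where P = ?P])
  show "2 * T > 0"
    using T_pos by simp
  show "?P (t + 2 * T) \<longleftrightarrow> ?P t" for t
    using periodic_pair_sol by (simp add: periodic_pair_def \<alpha>_2T_periodic phi_2T_periodic)
  show "?P t" if "0 \<le> t" "t < 2 * T" for t
    using that
  proof (cases rule: period_quarters)
    case 1
    then show ?thesis by (simp add: v_sol_first_quarter phi_first_quarter)
  next
    case 2
    then show ?thesis using \<alpha>_zero by simp
  next
    case 3
    then show ?thesis by (simp add: v_sol_third_quarter[OF sys] phi_third_quarter)
  next
    case 4
    then show ?thesis by (simp add: \<alpha>_zero')
  qed
qed

lemma \<beta>_u_sol_minus_one:
  assumes sys: "tanh_system A B \<sigma> \<rho>"
  shows "\<beta> t * (-1 + u_sol \<sigma> \<rho> t) = tanh \<sigma> * (\<beta> t * psi t)" (is "?P t")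
proof (rule periodic_induct[where P = ?P])
  show "2 * T > 0"
    using T_pos by simp
  show "?P (t + 2 * T) \<longleftrightarrow> ?P t" for t
    using periodic_pair_sol by (simp add: periodic_pair_def \<beta>_2T_periodic psi_2T_periodic)
  show "?P t" if "0 \<le> t" "t < 2 * T" for t
    using that
  proof (cases rule: period_quarters)
    case 1
    then show ?thesis using \<beta>_zero by simp
  next
    case 2
    then show ?thesis by (simp add: u_sol_second_quarter[OF sys] psi_second_quarter)
  next
    case 3
    then show ?thesis by (simp add: \<beta>_zero')
  next
    case 4
    then show ?thesis by (simp add: u_sol_fourth_quarter psi_fourth_quarter)
  qed
qed

lemma lv_solution_sol:
  assumes sys: "tanh_system A B \<sigma> \<rho>"
  shows "lv_solution \<alpha> \<beta> (u_sol \<sigma> \<rho>) (v_sol \<sigma> \<rho>)"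
proof -
  have "(u_sol \<sigma> \<rho> has_real_derivative u_sol \<sigma> \<rho> t * (tanh \<rho> * (\<alpha> t * phi t))) (at t)"
   and "(v_sol \<sigma> \<rho> has_real_derivative v_sol \<sigma> \<rho> t * (tanh \<sigma> * (\<beta> t * psi t))) (at t)" for t
    unfolding u_sol_def [abs_def] v_sol_def [abs_def]
    by (auto intro!: derivative_eq_intros G_deriv H_deriv)
  then show ?thesis
    unfolding lv_solution_def
    by (simp add: \<alpha>_one_minus_v_sol[OF sys, symmetric] \<beta>_u_sol_minus_one[OF sys, symmetric] mult_ac)
qed

lemma minimal_period_2T:
  assumes sol: "lv_solution \<alpha> \<beta> u v" and pos: "coexistence_state u v"
    and per: "periodic_pair (2 * T) u v" and u_T: "u T \<noteq> u 0"
    and v_ne_1: "\<And>t. t \<in> {0<..<T/2} \<union> {T<..<3*T/2} \<Longrightarrow> v t \<noteq> 1"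
  shows "minimal_period (2 * T) u v"
proof -
  have "\<not> periodic_pair q u v" if "0 < q" "q < 2 * T" for q
  proof
    assume q_per: "periodic_pair q u v"
    \<comment> \<open>u' is q-periodic and vanishes on [T/2, T], where \<alpha> = 0; shifting that interval by q
      meets a point where \<alpha> > 0 and v \<noteq> 1, at which u' \<noteq> 0.\<close>
    define D where "D t = \<alpha> t * u t * (1 - v t)" for t
    have D_per: "D (t + q) = D t" for t
      by (rule DERIV_periodic[of u q]) (use q_per sol in \<open>auto simp: periodic_pair_def lv_solution_def D_def\<close>)
    have D_zero: "D t = 0" if "t \<in> {T/2..T}" for t
      using that \<alpha>_zero by (simp add: D_def)
    have D_nonzero: "D t \<noteq> 0" if "\<alpha> t > 0" "v t \<noteq> 1" for t
      using that pos[unfolded coexistence_state_def, rule_format, of t] by (simp add: D_def)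
    consider "q = T" | "q < T" | "T < q" by linarith
    then show False
    proof cases
      case 1
      then show False
        using q_per u_T unfolding periodic_pair_def by (metis add_0)
    next
      case 2
      have "\<alpha> (T + q/2) > 0" "v (T + q/2) \<noteq> 1"
        using \<alpha>_pos' v_ne_1 \<open>0 < q\<close> 2 by simp_all
      then show False
        using D_per[of "T - q/2"] D_zero[of "T - q/2"] D_nonzero[of "T + q/2"] \<open>0 < q\<close> 2
        by (simp add: algebra_simps)
    next
      case 3
      define w where "w = (q - T) / 2"
      have "w \<in> {0<..<T/2}"
        using 3 \<open>q < 2 * T\<close> by (simp add: w_def)
      then have "\<alpha> (w + 2 * T) > 0" "v (w + 2 * T) \<noteq> 1"
        using \<alpha>_pos v_ne_1 per by (simp_all add: \<alpha>_2T_periodic periodic_pair_def)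
      moreover have "(3 * T - q) / 2 + q = w + 2 * T"
        by (simp add: w_def field_simps)
      ultimately show False
        using D_per[of "(3 * T - q) / 2"] D_zero[of "(3 * T - q) / 2"] D_nonzero[of "w + 2 * T"]
          3 \<open>q < 2 * T\<close> by simp
    qed
  qed
  then show ?thesis
    using T_pos per by (simp add: minimal_period_def)
qed

lemma minimal_period_sol:
  assumes sys: "tanh_system A B \<sigma> \<rho>" and "\<sigma> \<noteq> 0"
  shows "minimal_period (2 * T) (u_sol \<sigma> \<rho>) (v_sol \<sigma> \<rho>)"
proof (rule minimal_period_2T[OF lv_solution_sol[OF sys] coexistence_state_sol periodic_pair_sol])
  have "\<rho> \<noteq> 0"
    using sys \<open>\<sigma> \<noteq> 0\<close> by (auto simp: tanh_system_def)
  then show "v_sol \<sigma> \<rho> t \<noteq> 1" if "t \<in> {0<..<T/2} \<union> {T<..<3*T/2}" for t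
    using that v_sol_first_quarter[of t] v_sol_third_quarter[OF sys, of t] by auto
  show "u_sol \<sigma> \<rho> T \<noteq> u_sol \<sigma> \<rho> 0"
    using u_sol_second_quarter[OF sys, of T] T_pos \<open>\<sigma> \<noteq> 0\<close> by simp
qed

lemma minimal_period_state_eq_sol:
  assumes sol: "lv_solution \<alpha> \<beta> u v" and pos: "coexistence_state u v"
    and min: "minimal_period (2 * T) u v"
  obtains \<sigma> \<rho> where "tanh_system A B \<sigma> \<rho>" "\<sigma> \<noteq> 0" "u = u_sol \<sigma> \<rho>" "v = v_sol \<sigma> \<rho>"
proof -
  have per: "periodic_pair (2 * T) u v"
    using min by (simp add: minimal_period_def)
  obtain \<sigma> \<rho> where sys: "tanh_system A B \<sigma> \<rho>" and init: "u 0 = 1 - tanh \<sigma>" "v 0 = 1 - tanh \<rho>"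
    using periodic_state_tanh_system[OF sol pos per] .
  have "\<sigma> \<noteq> 0"
  proof
    assume "\<sigma> = 0"
    with sys init have "u 0 = 1" "v 0 = 1"
      by (simp_all add: tanh_system_def)
    then have "u = (\<lambda>_. 1) \<and> v = (\<lambda>_. 1)"
      using periodic_solutions_unique[OF sol lv_solution_const per] by (simp add: periodic_pair_def)
    then have "periodic_pair T u v"
      by (simp add: periodic_pair_def)
    then show False
      using min T_pos by (simp add: minimal_period_def)
  qed
  moreover have "u = u_sol \<sigma> \<rho> \<and> v = v_sol \<sigma> \<rho>"
    using periodic_solutions_unique[OF sol lv_solution_sol[OF sys] per periodic_pair_sol] init
      v_sol_first_quarter[of 0] T_pos by simp
  ultimately show ?thesis
    using that sys by blast
qed

lemma minimal_period_states_eq: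
  "{(u, v). lv_solution \<alpha> \<beta> u v \<and> coexistence_state u v \<and> minimal_period (2 * T) u v}
   = (\<lambda>(\<sigma>, \<rho>). (u_sol \<sigma> \<rho>, v_sol \<sigma> \<rho>)) ` {(\<sigma>, \<rho>). tanh_system A B \<sigma> \<rho> \<and> \<sigma> \<noteq> 0}"
proof (intro equalityI subsetI)
  fix x
  assume "x \<in> {(u, v). lv_solution \<alpha> \<beta> u v \<and> coexistence_state u v \<and> minimal_period (2 * T) u v}"
  then obtain u v where "x = (u, v)" "lv_solution \<alpha> \<beta> u v" "coexistence_state u v"
    "minimal_period (2 * T) u v"
    by blast
  then show "x \<in> (\<lambda>(\<sigma>, \<rho>). (u_sol \<sigma> \<rho>, v_sol \<sigma> \<rho>)) ` {(\<sigma>, \<rho>). tanh_system A B \<sigma> \<rho> \<and> \<sigma> \<noteq> 0}"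
    by (auto elim!: minimal_period_state_eq_sol)
qed (auto simp: lv_solution_sol coexistence_state_sol minimal_period_sol)

theorem card_minimal_period_states:
  "card {(u, v). lv_solution \<alpha> \<beta> u v \<and> coexistence_state u v \<and> minimal_period (2 * T) u v} = 2"
proof -
  obtain \<sigma>\<^sub>0 \<rho>\<^sub>0 where "\<sigma>\<^sub>0 > 0"
    and solutions: "{(\<sigma>, \<rho>). tanh_system A B \<sigma> \<rho> \<and> \<sigma> \<noteq> 0} = {(\<sigma>\<^sub>0, \<rho>\<^sub>0), (-\<sigma>\<^sub>0, -\<rho>\<^sub>0)}"
    using tanh_system_nonzero_solutions[OF A_pos B_pos AB_gt_4] .
  then have "u_sol \<sigma>\<^sub>0 \<rho>\<^sub>0 0 \<noteq> u_sol (-\<sigma>\<^sub>0) (-\<rho>\<^sub>0) 0"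
    by simp
  then have "u_sol \<sigma>\<^sub>0 \<rho>\<^sub>0 \<noteq> u_sol (-\<sigma>\<^sub>0) (-\<rho>\<^sub>0)"
    by metis
  then show ?thesis
    unfolding minimal_period_states_eq solutions by simp
qed

end

theorem theorem2p1:
  fixes T :: real and \<alpha> \<beta> :: "real \<Rightarrow> real"
  assumes "T > 0"
    and "continuous_on UNIV \<alpha>" and "continuous_on UNIV \<beta>"
    and "\<forall>t. \<alpha> (t + T) = \<alpha> t" and "\<forall>t. \<beta> (t + T) = \<beta> t"
    and "\<forall>t\<in>{T/2..T}. \<alpha> t = 0" and "\<forall>t\<in>{0..T/2}. \<beta> t = 0"
    and "\<forall>t\<in>{0<..<T/2}. \<alpha> t > 0" and "\<forall>t\<in>{T/2<..<T}. \<beta> t > 0"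
    and "integral {0..T} \<alpha> * integral {0..T} \<beta> > 4"
  shows "card {(u, v). lv_solution \<alpha> \<beta> u v \<and> coexistence_state u v \<and>
                       minimal_period (2 * T) u v} = 2"
proof -
  interpret lv_setting T \<alpha> \<beta>
    using assms by unfold_locales
  show ?thesis
    by (rule card_minimal_period_states)
qed

end
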